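(* Let $0<\lambda<\frac{5-\sqrt{21}}{2}$ and let $K$ be the attractor of the IFS $f_1(x)=\lambda x$, $f_2(x)=\lambda x+2\lambda$, $f_3(x)=\lambda x+3\lambda-\lambda^2$, $f_4(x)=\lambda x+1-\lambda$. Then $U_{2i+1}=\emptyset$ for every integer $i\ge1$.
   Context: A coding of $x\in K$ is a sequence $(i_n)\in\{1,2,3,4\}^{\mathbb{N}}$ with $x=\lim_{n\to\infty}f_{i_1}\circ\cdots\circ f_{i_n}(0)$. $U_k$ denotes the set of $x\in K$ having exactly $k$ distinct codings. *)

theory Defs
  imports "HOL-Analysis.Analysis"
begin

definition ifs_map :: "real \<Rightarrow> nat \<Rightarrow> real \<Rightarrow> real" where
  "ifs_map lam i x =
     (if i = 1 then lam * x
      else if i = 2 then lam * x + 2 * lam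
      else if i = 3 then lam * x + 3 * lam - lam ^ 2
      else lam * x + 1 - lam)"

primrec iter_comp :: "real \<Rightarrow> (nat \<Rightarrow> nat) \<Rightarrow> nat \<Rightarrow> real \<Rightarrow> real" where
  "iter_comp lam s 0 = id"
| "iter_comp lam s (Suc n) = iter_comp lam s n \<circ> ifs_map lam (s n)"

definition attractor :: "real \<Rightarrow> real set" where
  "attractor lam = (THE K. K \<noteq> {} \<and> compact K \<and> K = (\<Union>i\<in>{1..4}. ifs_map lam i ` K))"

definition codings :: "real \<Rightarrow> real \<Rightarrow> (nat \<Rightarrow> nat) set" where
  "codings lam x = {s. (\<forall>n. s n \<in> {1..4}) \<and> (\<lambda>n. iter_comp lam s n 0) \<longlonglongrightarrow> x}"

definition U :: "real \<Rightarrow> nat \<Rightarrow> real set" where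
  "U lam k = {x \<in> attractor lam. finite (codings lam x) \<and> card (codings lam x) = k}"

end

theory Submission
  imports Defs
begin

text \<open>All codings of a point agree up to the first position n where two of them differ.
  Since f1([0,1]), f4([0,1]) and f2([0,1]) \<union> f3([0,1]) are pairwise disjoint and
  f2([0,1]) \<inter> f3([0,1]) = f2 f4([0,1]) = f3 f1([0,1]), every coding reads 2,4 or 3,1 at
  positions n, n+1. Because f2 \<circ> f4 = f3 \<circ> f1, exchanging these two blocks is an involution
  on the codings that changes the digit at n, so a point with more than one coding has an even
  number of them.\<close>

lemma ifs_map_affine: "ifs_map lam i y = lam * y + ifs_map lam i 0"
  by (simp add: ifs_map_def)

lemma iter_comp_affine: "iter_comp lam s n y = lam ^ n * y + iter_comp lam s n 0"
proof (induction n arbitrary: y)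
  case 0
  then show ?case by simp
next
  case (Suc n)
  have "iter_comp lam s (Suc n) y = lam ^ n * ifs_map lam (s n) y + iter_comp lam s n 0"
    using Suc.IH[of "ifs_map lam (s n) y"] by simp
  moreover have "iter_comp lam s (Suc n) 0 = lam ^ n * ifs_map lam (s n) 0 + iter_comp lam s n 0"
    using Suc.IH[of "ifs_map lam (s n) 0"] by simp
  ultimately show ?case
    by (subst (asm) ifs_map_affine) (simp add: algebra_simps)
qed

lemma iter_comp_inj:
  assumes "lam \<noteq> 0" "iter_comp lam s n y = iter_comp lam s n z"
  shows "y = z"
  using assms iter_comp_affine[of lam s n y] iter_comp_affine[of lam s n z] by simp

lemma iter_comp_add:
  "iter_comp lam s (n + m) y = iter_comp lam s n (iter_comp lam (\<lambda>k. s (n + k)) m y)"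
  by (induction m arbitrary: y) auto

lemma iter_comp_cong: "(\<And>k. k < n \<Longrightarrow> s k = t k) \<Longrightarrow> iter_comp lam s n = iter_comp lam t n"
  by (induction n) auto

lemma ifs_map_2_4_eq_3_1: "ifs_map lam 2 (ifs_map lam 4 z) = ifs_map lam 3 (ifs_map lam 1 z)"
  by (simp add: ifs_map_def algebra_simps power2_eq_square)

lemma iter_comp_swap_block:
  assumes "r n = a" "r (Suc n) = b"
    and "\<And>z. ifs_map lam a (ifs_map lam b z) = ifs_map lam c (ifs_map lam d z)"
  shows "iter_comp lam (r(n := c, Suc n := d)) (Suc (Suc n) + m) = iter_comp lam r (Suc (Suc n) + m)"
proof -
  let ?r = "r(n := c, Suc n := d)"
  have tail: "(\<lambda>k. ?r (Suc (Suc n) + k)) = (\<lambda>k. r (Suc (Suc n) + k))" by auto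
  have "iter_comp lam ?r n = iter_comp lam r n" by (rule iter_comp_cong) auto
  then have "iter_comp lam ?r (Suc (Suc n)) = iter_comp lam r (Suc (Suc n))"
    using assms by (simp add: fun_eq_iff)
  then show ?thesis by (simp only: fun_eq_iff iter_comp_add tail) simp
qed

lemma codings_swap_block:
  assumes "r \<in> codings lam x" "r n = a" "r (Suc n) = b" "c \<in> {1..4}" "d \<in> {1..4}"
    and "\<And>z. ifs_map lam a (ifs_map lam b z) = ifs_map lam c (ifs_map lam d z)"
  shows "r(n := c, Suc n := d) \<in> codings lam x"
proof -
  have digits: "\<forall>k. r k \<in> {1..4}" and lim: "(\<lambda>m. iter_comp lam r m 0) \<longlonglongrightarrow> x"
    using assms(1) by (auto simp: codings_def)
  have "(\<lambda>m. iter_comp lam r (m + Suc (Suc n)) 0) \<longlonglongrightarrow> x"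
    by (rule LIMSEQ_ignore_initial_segment[OF lim])
  then have "(\<lambda>m. iter_comp lam (r(n := c, Suc n := d)) (m + Suc (Suc n)) 0) \<longlonglongrightarrow> x"
    using iter_comp_swap_block[OF assms(2,3,6)] by (simp add: add.commute)
  then have "(\<lambda>m. iter_comp lam (r(n := c, Suc n := d)) m 0) \<longlonglongrightarrow> x"
    by (rule LIMSEQ_offset)
  then show ?thesis using digits assms(4,5) by (auto simp: codings_def)
qed

text \<open>The assumption gap_3_4 says f3(1) < f4(0); with lam < 1 it forces lam < 1/4, so that
  f2([0,1]) \<inter> f3([0,1]) is the only overlap among the first-level images of [0,1].\<close>

locale overlap_ifs =
  fixes lam :: real
  assumes lam_pos: "0 < lam" and lam_less_1: "lam < 1"
    and gap_3_4: "4 * lam - lam ^ 2 < 1 - lam"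
begin

lemma lam_sq_le: "lam ^ 2 \<le> lam"
  using lam_pos lam_less_1 by (simp add: power2_eq_square mult_le_cancel_left1)

lemma lam_less_quarter: "lam < 1 / 4"
  using gap_3_4 lam_sq_le by linarith

lemma lam_mult_bounds: "0 \<le> y \<Longrightarrow> y \<le> 1 \<Longrightarrow> 0 \<le> lam * y \<and> lam * y \<le> lam"
  using lam_pos by (simp add: mult_le_cancel_left1)

lemma ifs_map_unit_interval:
  assumes "i \<in> {1..4}" "0 \<le> y" "y \<le> 1"
  shows "0 \<le> ifs_map lam i y \<and> ifs_map lam i y \<le> 1"
  using assms lam_mult_bounds[OF assms(2,3)] lam_sq_le gap_3_4
  by (auto simp: ifs_map_def)

lemma iter_comp_unit_interval:
  assumes "\<forall>k. s k \<in> {1..4}" "0 \<le> y" "y \<le> 1"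
  shows "0 \<le> iter_comp lam s n y \<and> iter_comp lam s n y \<le> 1"
  using assms(2,3)
proof (induction n arbitrary: y)
  case 0
  then show ?case by simp
next
  case (Suc n)
  then show ?case using ifs_map_unit_interval assms(1) by simp
qed

lemma coding_in_cylinder:
  assumes "s \<in> codings lam x"
  shows "\<exists>y. 0 \<le> y \<and> y \<le> 1 \<and> x = iter_comp lam s n y"
proof -
  have digits: "\<forall>k. s k \<in> {1..4}" and lim: "(\<lambda>m. iter_comp lam s m 0) \<longlonglongrightarrow> x"
    using assms by (auto simp: codings_def)
  define c where "c = iter_comp lam s n 0"
  define T where "T m = iter_comp lam (\<lambda>k. s (n + k)) m 0" for m
  have T_bounds: "0 \<le> T m \<and> T m \<le> 1" for m
    unfolding T_def using iter_comp_unit_interval digits by simp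
  have "iter_comp lam s (m + n) 0 = lam ^ n * T m + c" for m
    unfolding T_def c_def using iter_comp_add[of lam s n m 0] iter_comp_affine
    by (metis add.commute)
  then have T_eq: "T m = (iter_comp lam s (m + n) 0 - c) / lam ^ n" for m
    using lam_pos by simp
  have "(\<lambda>m. (iter_comp lam s (m + n) 0 - c) / lam ^ n) \<longlonglongrightarrow> (x - c) / lam ^ n"
    using LIMSEQ_ignore_initial_segment[OF lim] lam_pos by (intro tendsto_intros) auto
  then have T_lim: "T \<longlonglongrightarrow> (x - c) / lam ^ n"
    by (simp add: T_eq[abs_def])
  have "0 \<le> (x - c) / lam ^ n"
    by (rule LIMSEQ_le_const[OF T_lim]) (use T_bounds in auto)
  moreover have "(x - c) / lam ^ n \<le> 1"
    by (rule LIMSEQ_le_const2[OF T_lim]) (use T_bounds in auto)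
  moreover have "x = iter_comp lam s n ((x - c) / lam ^ n)"
    using iter_comp_affine[of lam s n "(x - c) / lam ^ n"] lam_pos unfolding c_def by simp
  ultimately show ?thesis by blast
qed

lemma ifs_map_collision:
  assumes "i \<in> {1..4}" "j \<in> {1..4}" "i \<noteq> j" "0 \<le> a" "a \<le> 1" "0 \<le> b" "b \<le> 1"
    and eq: "ifs_map lam i a = ifs_map lam j b"
  shows "(i = 2 \<and> j = 3 \<and> 1 - lam \<le> a \<and> b \<le> lam) \<or> (i = 3 \<and> j = 2 \<and> 1 - lam \<le> b \<and> a \<le> lam)"
proof -
  have ab: "0 \<le> lam * a" "lam * a \<le> lam" "0 \<le> lam * b" "lam * b \<le> lam"
    using lam_mult_bounds assms(4-7) by auto
  consider "i = 2 \<and> j = 3" | "i = 3 \<and> j = 2" | "\<not> (i = 2 \<and> j = 3)" "\<not> (i = 3 \<and> j = 2)"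
    by blast
  then show ?thesis
  proof cases
    case 1
    with eq have "lam * (a - b - 1 + lam) = 0"
      by (simp add: ifs_map_def algebra_simps power2_eq_square)
    then have "a = b + 1 - lam" using lam_pos by simp
    with 1 assms(5,6) show ?thesis by auto
  next
    case 2
    with eq have "lam * (b - a - 1 + lam) = 0"
      by (simp add: ifs_map_def algebra_simps power2_eq_square)
    then have "b = a + 1 - lam" using lam_pos by simp
    with 2 assms(4,7) show ?thesis by auto
  next
    case 3
    have "i = 1 \<or> i = 2 \<or> i = 3 \<or> i = 4" "j = 1 \<or> j = 2 \<or> j = 3 \<or> j = 4"
      using assms(1,2) by auto
    with 3 assms(3) eq have False
      by (auto simp: ifs_map_def; insert ab lam_pos lam_sq_le lam_less_quarter gap_3_4; linarith)
    then show ?thesis ..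
  qed
qed

lemma digit_eq_4_if_image_ge:
  assumes "k \<in> {1..4}" "0 \<le> y" "y \<le> 1" "1 - lam \<le> ifs_map lam k y"
  shows "k = 4"
proof -
  have "0 \<le> lam * y" "lam * y \<le> lam" using lam_mult_bounds assms(2,3) by auto
  moreover have "k = 1 \<or> k = 2 \<or> k = 3 \<or> k = 4" using assms(1) by auto
  ultimately show ?thesis
    using assms(4) by (auto simp: ifs_map_def; insert lam_less_quarter gap_3_4 lam_sq_le; linarith)
qed

lemma digit_eq_1_if_image_le:
  assumes "k \<in> {1..4}" "0 \<le> y" "y \<le> 1" "ifs_map lam k y \<le> lam"
  shows "k = 1"
proof -
  have "0 \<le> lam * y" "lam * y \<le> lam" using lam_mult_bounds assms(2,3) by auto
  moreover have "k = 1 \<or> k = 2 \<or> k = 3 \<or> k = 4" using assms(1) by auto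
  ultimately show ?thesis
    using assms(4) by (auto simp: ifs_map_def; insert lam_pos lam_less_quarter lam_sq_le; linarith)
qed

lemma codings_first_difference:
  assumes s: "s \<in> codings lam x" and t: "t \<in> codings lam x"
    and agree: "\<And>k. k < n \<Longrightarrow> s k = t k" and differ: "s n \<noteq> t n"
  shows "(s n = 2 \<and> s (Suc n) = 4 \<and> t n = 3 \<and> t (Suc n) = 1) \<or>
         (s n = 3 \<and> s (Suc n) = 1 \<and> t n = 2 \<and> t (Suc n) = 4)"
proof -
  have s_digits: "\<forall>k. s k \<in> {1..4}" and t_digits: "\<forall>k. t k \<in> {1..4}"
    using s t by (auto simp: codings_def)
  obtain y where y: "0 \<le> y" "y \<le> 1" "x = iter_comp lam s (Suc (Suc n)) y"
    using coding_in_cylinder[OF s] by blast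
  obtain z where z: "0 \<le> z" "z \<le> 1" "x = iter_comp lam t (Suc (Suc n)) z"
    using coding_in_cylinder[OF t] by blast
  define a where "a = ifs_map lam (s (Suc n)) y"
  define b where "b = ifs_map lam (t (Suc n)) z"
  have a: "0 \<le> a \<and> a \<le> 1" unfolding a_def using ifs_map_unit_interval s_digits y by blast
  have b: "0 \<le> b \<and> b \<le> 1" unfolding b_def using ifs_map_unit_interval t_digits z by blast
  have "iter_comp lam t n = iter_comp lam s n" by (rule iter_comp_cong) (simp add: agree)
  then have "iter_comp lam s n (ifs_map lam (s n) a) = iter_comp lam s n (ifs_map lam (t n) b)"
    using y(3) z(3) unfolding a_def b_def by simp
  then have "ifs_map lam (s n) a = ifs_map lam (t n) b"
    by (rule iter_comp_inj[rotated]) (use lam_pos in simp)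
  then have "(s n = 2 \<and> t n = 3 \<and> 1 - lam \<le> a \<and> b \<le> lam) \<or>
             (s n = 3 \<and> t n = 2 \<and> 1 - lam \<le> b \<and> a \<le> lam)"
    using ifs_map_collision[of "s n" "t n" a b] s_digits t_digits a b differ by simp
  then show ?thesis
    using digit_eq_4_if_image_ge[of "s (Suc n)" y] digit_eq_1_if_image_le[of "s (Suc n)" y]
      digit_eq_4_if_image_ge[of "t (Suc n)" z] digit_eq_1_if_image_le[of "t (Suc n)" z]
      s_digits t_digits y z
    unfolding a_def b_def by blast
qed

lemma codings_common_block:
  assumes "s \<in> codings lam x" "t \<in> codings lam x" "s \<noteq> t"
  shows "\<exists>n. \<forall>r\<in>codings lam x. (r n = 2 \<and> r (Suc n) = 4) \<or> (r n = 3 \<and> r (Suc n) = 1)"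
proof -
  let ?C = "codings lam x"
  let ?differ = "\<lambda>n. \<exists>s\<in>?C. \<exists>t\<in>?C. s n \<noteq> t n"
  define n where "n = (LEAST n. ?differ n)"
  have "?differ n"
    unfolding n_def by (rule LeastI_ex) (use assms in \<open>auto simp: fun_eq_iff\<close>)
  then obtain s0 t0 where s0: "s0 \<in> ?C" and t0: "t0 \<in> ?C" and "s0 n \<noteq> t0 n" by blast
  have agree: "\<And>k. k < n \<Longrightarrow> r k = r' k" if "r \<in> ?C" "r' \<in> ?C" for r r'
    using not_less_Least[of _ ?differ] that unfolding n_def by blast
  have "(r n = 2 \<and> r (Suc n) = 4) \<or> (r n = 3 \<and> r (Suc n) = 1)" if r: "r \<in> ?C" for r
  proof (cases "r n = s0 n")
    case True
    then have "r n \<noteq> t0 n" using \<open>s0 n \<noteq> t0 n\<close> by simp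
    then show ?thesis using codings_first_difference[OF r t0] agree[OF r t0] by blast
  next
    case False
    then show ?thesis using codings_first_difference[OF r s0] agree[OF r s0] by blast
  qed
  then show ?thesis by blast
qed

lemma even_card_codings:
  assumes "finite (codings lam x)" "\<not> card (codings lam x) \<le> 1"
  shows "even (card (codings lam x))"
proof -
  let ?C = "codings lam x"
  obtain s t where "s \<in> ?C" "t \<in> ?C" "s \<noteq> t"
    using assms(2) card_le_Suc0_iff_eq[OF assms(1)] by (auto simp only: One_nat_def)
  then obtain n where block: "\<forall>r\<in>?C. (r n = 2 \<and> r (Suc n) = 4) \<or> (r n = 3 \<and> r (Suc n) = 1)"
    by (metis codings_common_block)
  define C2 where "C2 = {r \<in> ?C. r n = 2}"
  define C3 where "C3 = {r \<in> ?C. r n = 3}"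
  have C2_next: "r (Suc n) = 4" if "r \<in> C2" for r
    using block that unfolding C2_def by fastforce
  have C3_next: "r (Suc n) = 1" if "r \<in> C3" for r
    using block that unfolding C3_def by fastforce
  have "bij_betw (\<lambda>r. r(n := 3, Suc n := 1)) C2 C3"
  proof (rule bij_betw_byWitness[where f' = "\<lambda>r. r(n := 2, Suc n := 4)"])
    show "\<forall>r\<in>C2. r(n := 3, Suc n := 1, n := 2, Suc n := 4) = r"
      using C2_next unfolding C2_def by (auto simp: fun_eq_iff)
    show "\<forall>r\<in>C3. r(n := 2, Suc n := 4, n := 3, Suc n := 1) = r"
      using C3_next unfolding C3_def by (auto simp: fun_eq_iff)
    show "(\<lambda>r. r(n := 3, Suc n := 1)) ` C2 \<subseteq> C3"
    proof (rule image_subsetI)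
      fix r assume r: "r \<in> C2"
      have "r(n := 3, Suc n := 1) \<in> ?C"
        by (rule codings_swap_block[OF _ _ _ _ _ ifs_map_2_4_eq_3_1])
          (use r C2_next[OF r] in \<open>simp_all add: C2_def\<close>)
      then show "r(n := 3, Suc n := 1) \<in> C3" unfolding C3_def by simp
    qed
    show "(\<lambda>r. r(n := 2, Suc n := 4)) ` C3 \<subseteq> C2"
    proof (rule image_subsetI)
      fix r assume r: "r \<in> C3"
      have "r(n := 2, Suc n := 4) \<in> ?C"
        by (rule codings_swap_block[OF _ _ _ _ _ ifs_map_2_4_eq_3_1[symmetric]])
          (use r C3_next[OF r] in \<open>simp_all add: C3_def\<close>)
      then show "r(n := 2, Suc n := 4) \<in> C2" unfolding C2_def by simp
    qed
  qed
  then have "card C2 = card C3" by (rule bij_betw_same_card)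
  moreover have "?C = C2 \<union> C3" "C2 \<inter> C3 = {}"
    using block unfolding C2_def C3_def by fastforce+
  ultimately have "card ?C = 2 * card C2"
    using assms(1) card_Un_disjoint[of C2 C3] by simp
  then show ?thesis by simp
qed

end

lemma overlap_ifs_if_lam_small:
  assumes "0 < lam" "lam < (5 - sqrt 21) / 2"
  shows "overlap_ifs lam"
proof
  have "9 / 2 < sqrt 21" by (rule real_less_rsqrt) (simp add: power2_eq_square)
  then show "0 < lam" "lam < 1" using assms by simp_all
  have "(sqrt 21) ^ 2 < (5 - 2 * lam) ^ 2"
    using assms by (intro power_strict_mono) auto
  then show "4 * lam - lam ^ 2 < 1 - lam" by (simp add: power2_eq_square algebra_simps)
qed

theorem lemma2p30:
  fixes lam :: real and i :: nat
  assumes "0 < lam" and "lam < (5 - sqrt 21) / 2" and "i \<ge> 1"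
  shows "U lam (2 * i + 1) = {}"
proof -
  interpret overlap_ifs lam using overlap_ifs_if_lam_small assms(1,2) .
  have "x \<notin> U lam (2 * i + 1)" for x
    using even_card_codings[of x] assms(3) unfolding U_def by auto
  then show ?thesis by blast
qed

end
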